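(* Let $\mathbb{F}$ be a field with $\mathrm{Char}(\mathbb{F})=2$. Every nontrivial $2$-dimensional associative algebra over $\mathbb{F}$ is isomorphic to exactly one of the following algebras (given by their matrices of structure constants): <ol> <li>$As_{12,2}^1=\begin{pmatrix}0&0&0&0\\1&0&0&0\end{pmatrix}$;</li> <li>$As_{11,2}^2(\beta_1)=\begin{pmatrix}0&1&1&0\\ \beta_1&0&0&1\end{pmatrix}$, $\beta_1\in\mathbb{F}$, where $As_{11,2}^2(\beta_1)\cong As_{11,2}^2(\beta_1')$ if and only if $\beta_1'=b^2(\beta_1+a^2)$ for some $a,b\in\mathbb{F}$, $b\neq0$;</li> <li>$As_{6,2}^3=\begin{pmatrix}1&0&0&0\\0&0&1&0\end{pmatrix}$;</li> <li>$As_{4,2}^4(\beta_1)=\begin{pmatrix}1&1&1&0\\ \beta_1&0&0&1\end{pmatrix}$, $\beta_1\in\mathbb{F}$, where $As_{4,2}^4(\beta_1)\cong As_{4,2}^4(\beta_1')$ if and only if $\beta_1'=\beta_1+a+a^2$ for some $a\in\mathbb{F}$;</li> <li>$As_{3,2}^5=\begin{pmatrix}1&0&0&0\\0&0&0&0\end{pmatrix}$;</li> <li>$As_{3,2}^6=\begin{pmatrix}1&0&0&0\\0&1&0&0\end{pmatrix}$.</li> </ol> Algebras from different items are pairwise non-isomorphic.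
   Context: Let $\mathbb{F}$ be a field. A $2$-dimensional algebra over $\mathbb{F}$ is a $2$-dimensional $\mathbb{F}$-vector space with a bilinear product; it is associative if $(xy)z=x(yz)$ for all $x,y,z$. Fix a basis $(e_1,e_2)$. The matrix of structure constants $\begin{pmatrix}\alpha_1&\alpha_2&\alpha_3&\alpha_4\\ \beta_1&\beta_2&\beta_3&\beta_4\end{pmatrix}$ denotes the algebra with $e_1e_1=\alpha_1e_1+\beta_1e_2$, $e_1e_2=\alpha_2e_1+\beta_2e_2$, $e_2e_1=\alpha_3e_1+\beta_3e_2$, $e_2e_2=\alpha_4e_1+\beta_4e_2$. An algebra is nontrivial if its product is not identically zero. Two algebras are isomorphic if there is an invertible linear map $f$ between them with $f(xy)=f(x)f(y)$ for all $x,y$. *)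

theory Defs
  imports Main
begin

text \<open>A 2-dimensional algebra over a field is given, w.r.t. the basis e1=(1,0), e2=(0,1)
 of F^2 (vectors = pairs), by its matrix of structure constants
 ((alpha1,alpha2,alpha3,alpha4),(beta1,beta2,beta3,beta4)).\<close>

type_synonym 'a sc = "('a \<times> 'a \<times> 'a \<times> 'a) \<times> ('a \<times> 'a \<times> 'a \<times> 'a)"

definition sc_mult :: "'a::field sc \<Rightarrow> 'a \<times> 'a \<Rightarrow> 'a \<times> 'a \<Rightarrow> 'a \<times> 'a" where
  "sc_mult A x y =
     (let ((a1,a2,a3,a4),(b1,b2,b3,b4)) = A; (x1,x2) = x; (y1,y2) = y in
       (x1*y1*a1 + x1*y2*a2 + x2*y1*a3 + x2*y2*a4,
        x1*y1*b1 + x1*y2*b2 + x2*y1*b3 + x2*y2*b4))"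

definition vadd2 :: "'a::field \<times> 'a \<Rightarrow> 'a \<times> 'a \<Rightarrow> 'a \<times> 'a" where
  "vadd2 x y = (fst x + fst y, snd x + snd y)"

definition vscale2 :: "'a::field \<Rightarrow> 'a \<times> 'a \<Rightarrow> 'a \<times> 'a" where
  "vscale2 c x = (c * fst x, c * snd x)"

definition linear2 :: "('a::field \<times> 'a \<Rightarrow> 'a \<times> 'a) \<Rightarrow> bool" where
  "linear2 f \<longleftrightarrow> (\<forall>x y. f (vadd2 x y) = vadd2 (f x) (f y)) \<and> (\<forall>c x. f (vscale2 c x) = vscale2 c (f x))"

definition sc_assoc :: "'a::field sc \<Rightarrow> bool" where
  "sc_assoc A \<longleftrightarrow> (\<forall>x y z. sc_mult A (sc_mult A x y) z = sc_mult A x (sc_mult A y z))"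

definition sc_nontrivial :: "'a::field sc \<Rightarrow> bool" where
  "sc_nontrivial A \<longleftrightarrow> (\<exists>x y. sc_mult A x y \<noteq> (0, 0))"

definition sc_iso :: "'a::field sc \<Rightarrow> 'a sc \<Rightarrow> bool" where
  "sc_iso A B \<longleftrightarrow> (\<exists>f. linear2 f \<and> bij f \<and> (\<forall>x y. f (sc_mult A x y) = sc_mult B (f x) (f y)))"

definition As1 :: "'a::field sc" where "As1 = ((0,0,0,0),(1,0,0,0))"
definition As2 :: "'a::field \<Rightarrow> 'a sc" where "As2 b = ((0,1,1,0),(b,0,0,1))"
definition As3 :: "'a::field sc" where "As3 = ((1,0,0,0),(0,0,1,0))"
definition As4 :: "'a::field \<Rightarrow> 'a sc" where "As4 b = ((1,1,1,0),(b,0,0,1))"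
definition As5 :: "'a::field sc" where "As5 = ((1,0,0,0),(0,0,0,0))"
definition As6 :: "'a::field sc" where "As6 = ((1,0,0,0),(0,1,0,0))"

end

theory Submission
  imports Defs
begin

text \<open>If some x is independent of its square, then in the basis (x, x x) we have
  e1 e1 = e2, and associativity leaves a two-parameter family of structure constants which
  rescaling reduces to As1, As2, As4 or As5. Otherwise every square is a multiple of its root;
  a nonzero square then yields an idempotent e, and in a basis (e, v) associativity forces one of
  As2, As3, As4, As5, As6, while if all squares vanish associativity kills the product.
  The listed algebras are told apart by the existence of a unit or a right unit, commutativity,
  the vanishing of triple products and whether squares act as scalars.
  An isomorphism between algebras with unit e2 fixes e2 and sends e1 to s e1 + t e2; comparing
  the images of e1 e1 gives the relations between the parameters, the cross terms 2 s t
  vanishing in characteristic 2.\<close>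

definition det2 :: "'a::field \<times> 'a \<Rightarrow> 'a \<times> 'a \<Rightarrow> 'a" where
  "det2 u v = fst u * snd v - snd u * fst v"

definition lincomb2 :: "'a::field \<Rightarrow> 'a \<Rightarrow> 'a \<times> 'a \<Rightarrow> 'a \<times> 'a \<Rightarrow> 'a \<times> 'a" where
  "lincomb2 a b u v = (a * fst u + b * fst v, a * snd u + b * snd v)"

lemma sc_mult_eq [simp]:
  "sc_mult ((a1,a2,a3,a4),(b1,b2,b3,b4)) (x1,x2) (y1,y2) =
     (x1*y1*a1 + x1*y2*a2 + x2*y1*a3 + x2*y2*a4,
      x1*y1*b1 + x1*y2*b2 + x2*y1*b3 + x2*y2*b4)"
  by (simp add: sc_mult_def)

lemma sc_mult_lincomb2:
  "sc_mult A (lincomb2 a b u v) (lincomb2 c d u v) =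
    (a*c*fst (sc_mult A u u) + a*d*fst (sc_mult A u v) + b*c*fst (sc_mult A v u) + b*d*fst (sc_mult A v v),
     a*c*snd (sc_mult A u u) + a*d*snd (sc_mult A u v) + b*c*snd (sc_mult A v u) + b*d*snd (sc_mult A v v))"
  by (cases A; cases u; cases v) (auto simp: lincomb2_def algebra_simps)

lemma sc_mult_vscale2: "sc_mult A (vscale2 c x) (vscale2 d y) = vscale2 (c*d) (sc_mult A x y)"
  by (cases A; cases x; cases y) (auto simp: vscale2_def algebra_simps)

lemma linear2_zero: "linear2 f \<Longrightarrow> f (0,0) = (0,0)"
  unfolding linear2_def by (metis fst_conv mult_zero_left snd_conv vscale2_def)

lemma linear2_lincomb2: "linear2 f \<Longrightarrow> f (lincomb2 a b u v) = lincomb2 a b (f u) (f v)"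
proof -
  assume f: "linear2 f"
  have "lincomb2 a b u v = vadd2 (vscale2 a u) (vscale2 b v)"
    by (simp add: lincomb2_def vadd2_def vscale2_def)
  then show ?thesis using f unfolding linear2_def by (simp add: lincomb2_def vadd2_def vscale2_def)
qed

lemma linear2_apply: "linear2 f \<Longrightarrow> f (x1,x2) = lincomb2 x1 x2 (f (1,0)) (f (0,1))"
  using linear2_lincomb2[of f x1 x2 "(1,0)" "(0,1)"] by (simp add: lincomb2_def)

lemma det2_lincomb2_left: "det2 (lincomb2 a b u v) v = a * det2 u v"
  unfolding det2_def lincomb2_def by (simp add: algebra_simps)

lemma det2_lincomb2_right: "det2 u (lincomb2 a b u v) = b * det2 u v"
  unfolding det2_def lincomb2_def by (simp add: algebra_simps)

lemma det2_swap: "det2 v u = - det2 u v"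
  unfolding det2_def by (simp add: algebra_simps)

lemma lincomb2_unique:
  assumes "det2 u v \<noteq> 0" "lincomb2 a b u v = lincomb2 c d u v"
  shows "a = c" "b = d"
  using assms det2_lincomb2_left[of a b u v] det2_lincomb2_left[of c d u v]
    det2_lincomb2_right[of u a b v] det2_lincomb2_right[of u c d v] by auto

lemma lincomb2_coords:
  assumes "det2 u v \<noteq> 0"
  shows "lincomb2 (det2 w v / det2 u v) (det2 u w / det2 u v) u v = w"
proof -
  obtain u1 u2 v1 v2 w1 w2 where uvw: "u = (u1,u2)" "v = (v1,v2)" "w = (w1,w2)"
    by (metis prod.exhaust)
  have D: "u1*v2 - u2*v1 \<noteq> 0" using assms by (simp add: uvw det2_def)
  have "(w1*v2 - w2*v1) * u1 + (u1*w2 - u2*w1) * v1 = w1 * (u1*v2 - u2*v1)"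
       "(w1*v2 - w2*v1) * u2 + (u1*w2 - u2*w1) * v2 = w2 * (u1*v2 - u2*v1)"
    by (simp_all add: algebra_simps)
  with D show ?thesis by (simp add: uvw lincomb2_def det2_def divide_simps)
qed

lemma det2_eq_0_imp_scaled:
  assumes "det2 x y = 0" "x \<noteq> (0,0)" shows "\<exists>l. y = vscale2 l x"
proof -
  obtain x1 x2 y1 y2 where xy: "x = (x1,x2)" "y = (y1,y2)" by fastforce
  have e: "x1*y2 = x2*y1" using assms(1) unfolding xy det2_def by simp
  show ?thesis
  proof (cases "x1 = 0")
    case True
    then show ?thesis using assms(2) e unfolding xy vscale2_def
      by (intro exI[of _ "y2/x2"]) simp
  next
    case False
    then show ?thesis using e unfolding xy vscale2_def
      by (intro exI[of _ "y1/x1"]) (simp add: field_simps)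
  qed
qed

lemma det2_nonzero_exists:
  assumes "e \<noteq> (0,0)" shows "\<exists>v. det2 e v \<noteq> (0::'a::field)"
proof (cases "fst e = 0")
  case True
  with assms have "snd e \<noteq> 0" by (cases e) simp
  with True show ?thesis by (intro exI[of _ "(1,0)"]) (simp add: det2_def)
next
  case False
  then show ?thesis by (intro exI[of _ "(0,1)"]) (simp add: det2_def)
qed

lemma linear2_inj_det2:
  assumes f: "linear2 f" and "inj f"
  shows "det2 (f (1,0)) (f (0,1)) \<noteq> 0"
proof
  assume d: "det2 (f (1,0)) (f (0,1)) = 0"
  obtain p1 p2 q1 q2 where pq: "f (1,0) = (p1,p2)" "f (0,1) = (q1,q2)" by fastforce
  have kernel: "f x = (0,0) \<Longrightarrow> x = (0,0)" for x
    using \<open>inj f\<close> linear2_zero[OF f] by (metis injD)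
  have "p1*q2 = p2*q1" using d by (simp add: pq det2_def)
  then have "f (q1, -p1) = (0,0)" "f (q2, -p2) = (0,0)"
    unfolding linear2_apply[OF f, of q1] linear2_apply[OF f, of q2]
    by (simp_all add: pq lincomb2_def algebra_simps)
  then have "(q1, -p1) = (0,0)" "(q2, -p2) = (0,0)" using kernel by blast+
  then have "f (1,0) = (0,0)" using pq by simp
  then show False using kernel[of "(1,0)"] by simp
qed

definition sc_iso_map :: "'a::field sc \<Rightarrow> 'a sc \<Rightarrow> ('a \<times> 'a \<Rightarrow> 'a \<times> 'a) \<Rightarrow> bool" where
  "sc_iso_map A B f \<longleftrightarrow> linear2 f \<and> bij f \<and> (\<forall>x y. f (sc_mult A x y) = sc_mult B (f x) (f y))"

lemma sc_iso_iff_map: "sc_iso A B \<longleftrightarrow> (\<exists>f. sc_iso_map A B f)"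
  by (simp add: sc_iso_def sc_iso_map_def)

lemma sc_iso_map_mult: "sc_iso_map A B f \<Longrightarrow> f (sc_mult A x y) = sc_mult B (f x) (f y)"
  unfolding sc_iso_map_def by blast

lemma sc_iso_map_surj: "sc_iso_map A B f \<Longrightarrow> \<exists>x. y = f x"
  unfolding sc_iso_map_def by (metis bij_pointE)

lemma sc_iso_map_inv:
  assumes "sc_iso_map A B f" shows "sc_iso_map B A (inv f)"
proof -
  have f: "linear2 f" "bij f" "\<And>x y. f (sc_mult A x y) = sc_mult B (f x) (f y)"
    using assms by (auto simp: sc_iso_map_def)
  have f_inv: "f (inv f y) = y" for y using f(2) by (simp add: bij_is_surj surj_f_inv_f)
  have cancel: "f x = f y \<Longrightarrow> x = y" for x y using f(2) by (meson bij_is_inj injD)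
  have "linear2 (inv f)" unfolding linear2_def
    by (intro conjI allI; rule cancel) (metis f(1) f_inv linear2_def)+
  moreover have "bij (inv f)" using f(2) by (rule bij_imp_bij_inv)
  moreover have "inv f (sc_mult B x y) = sc_mult A (inv f x) (inv f y)" for x y
    by (rule cancel) (metis f(3) f_inv)
  ultimately show ?thesis by (simp add: sc_iso_map_def)
qed

lemma sc_iso_refl: "sc_iso A A"
  unfolding sc_iso_def linear2_def by (rule exI[of _ id]) simp

lemma sc_iso_sym: "sc_iso A B \<Longrightarrow> sc_iso B A"
  using sc_iso_map_inv by (metis sc_iso_iff_map)

lemma sc_iso_trans: "sc_iso A B \<Longrightarrow> sc_iso B C \<Longrightarrow> sc_iso A C"
proof -
  assume "sc_iso A B" "sc_iso B C"
  then obtain f g where "sc_iso_map A B f" "sc_iso_map B C g" by (auto simp: sc_iso_iff_map)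
  then have "sc_iso_map A C (g \<circ> f)"
    unfolding sc_iso_map_def linear2_def by (simp del: split_paired_All add: bij_comp)
  then show ?thesis by (auto simp: sc_iso_iff_map)
qed

lemma sc_assoc_iso: "sc_iso A B \<Longrightarrow> sc_assoc A \<Longrightarrow> sc_assoc B"
proof -
  assume "sc_iso A B" and assoc: "sc_assoc A"
  then obtain f where f: "sc_iso_map A B f" by (auto simp: sc_iso_iff_map)
  show ?thesis unfolding sc_assoc_def
  proof (intro allI)
    fix x y z
    obtain x' y' z' where "x = f x'" "y = f y'" "z = f z'" using sc_iso_map_surj[OF f] by metis
    then show "sc_mult B (sc_mult B x y) z = sc_mult B x (sc_mult B y z)"
      using assoc unfolding sc_assoc_def
      by (simp del: split_paired_All add: sc_iso_map_mult[OF f, symmetric])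
  qed
qed

lemma sc_iso_of_basis:
  fixes A :: "'a::field sc"
  assumes d: "det2 u v \<noteq> 0"
    and "sc_mult A u u = lincomb2 a1 b1 u v" "sc_mult A u v = lincomb2 a2 b2 u v"
    and "sc_mult A v u = lincomb2 a3 b3 u v" "sc_mult A v v = lincomb2 a4 b4 u v"
  shows "sc_iso A ((a1,a2,a3,a4),(b1,b2,b3,b4))"
proof -
  define g where "g x = lincomb2 (fst x) (snd x) u v" for x
  have "inj g" unfolding g_def by (rule injI) (metis lincomb2_unique[OF d] prod.expand)
  moreover have "surj g" unfolding g_def
    by (rule surjI[where f="\<lambda>w. (det2 w v / det2 u v, det2 u w / det2 u v)"])
      (simp add: lincomb2_coords[OF d])
  moreover have "linear2 g"
    unfolding linear2_def g_def lincomb2_def vadd2_def vscale2_def by (simp add: algebra_simps)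
  moreover have "g (sc_mult ((a1,a2,a3,a4),(b1,b2,b3,b4)) x y) = sc_mult A (g x) (g y)" for x y
    unfolding g_def sc_mult_lincomb2 assms(2-5)
    by (cases x, cases y) (simp add: lincomb2_def algebra_simps)
  ultimately have "sc_iso ((a1,a2,a3,a4),(b1,b2,b3,b4)) A"
    unfolding sc_iso_def bij_def by blast
  then show ?thesis by (rule sc_iso_sym)
qed

lemma sc_iso_structure_constants:
  fixes A :: "'a::field sc"
  assumes d: "det2 u v \<noteq> 0"
  obtains a1 a2 a3 a4 b1 b2 b3 b4 where "sc_iso A ((a1,a2,a3,a4),(b1,b2,b3,b4))"
    "sc_mult A u u = lincomb2 a1 b1 u v" "sc_mult A u v = lincomb2 a2 b2 u v"
    "sc_mult A v u = lincomb2 a3 b3 u v" "sc_mult A v v = lincomb2 a4 b4 u v"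
proof -
  define a where "a w = det2 w v / det2 u v" for w
  define b where "b w = det2 u w / det2 u v" for w
  have coords: "sc_mult A x y = lincomb2 (a (sc_mult A x y)) (b (sc_mult A x y)) u v" for x y
    unfolding a_def b_def using lincomb2_coords[OF d] by simp
  show thesis
    by (rule that[OF sc_iso_of_basis[OF d coords coords coords coords] coords coords coords coords])
qed

definition sc_iso_listed :: "'a::field sc \<Rightarrow> bool" where
  "sc_iso_listed A \<longleftrightarrow> sc_iso A As1 \<or> (\<exists>b. sc_iso A (As2 b)) \<or> sc_iso A As3 \<or>
        (\<exists>b. sc_iso A (As4 b)) \<or> sc_iso A As5 \<or> sc_iso A As6"

lemma sc_iso_listed_iso: "sc_iso A B \<Longrightarrow> sc_iso_listed B \<Longrightarrow> sc_iso_listed A"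
  unfolding sc_iso_listed_def by (meson sc_iso_trans)

lemma sc_iso_listed_if_e1_square_e2:
  fixes a2 :: "'a::field"
  assumes assoc: "sc_assoc ((0,a2,a3,a4),(1,b2,b3,b4))"
  shows "sc_iso_listed ((0,a2,a3,a4),(1,b2,b3,b4))"
proof -
  let ?B = "((0,a2,a3,a4),(1,b2,b3,b4))"
  have "sc_mult ?B (sc_mult ?B (1,0) (1,0)) x = sc_mult ?B (1,0) (sc_mult ?B (1,0) x)" for x
    using assoc unfolding sc_assoc_def by blast
  from this[of "(1,0)"] this[of "(0,1)"]
  have a3: "a3 = a2" "b3 = b2" and a4: "a4 = a2*b2" "b4 = a2 + b2*b2"
    by (simp_all add: algebra_simps)
  show ?thesis
  proof (cases "a2 = 0"; cases "b2 = 0")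
    assume "a2 = 0" "b2 = 0"
    then have "?B = As1" using a3 a4 by (simp add: As1_def)
    then show ?thesis unfolding sc_iso_listed_def using sc_iso_refl by metis
  next
    assume "a2 = 0" "b2 \<noteq> 0"
    then have "sc_iso ?B As5" unfolding As5_def
      by (intro sc_iso_of_basis[where u="(0,1/b2^2)" and v="(1,-1/b2)"])
        (use a3 a4 in \<open>simp_all add: det2_def lincomb2_def field_simps power2_eq_square\<close>)
    then show ?thesis unfolding sc_iso_listed_def by blast
  next
    assume "a2 \<noteq> 0" "b2 = 0"
    then have "sc_iso ?B (As2 a2)" unfolding As2_def
      by (intro sc_iso_of_basis[where u="(1,0)" and v="(0,1/a2)"])
        (use a3 a4 in \<open>simp_all add: det2_def lincomb2_def field_simps\<close>)
    then show ?thesis unfolding sc_iso_listed_def by blast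
  next
    assume "a2 \<noteq> 0" "b2 \<noteq> 0"
    then have "sc_iso ?B (As4 (a2/b2^2))" unfolding As4_def
      by (intro sc_iso_of_basis[where u="(1/b2,0)" and v="(-b2/a2,1/a2)"])
        (use a3 a4 in \<open>simp_all add: det2_def lincomb2_def field_simps power2_eq_square\<close>)
    then show ?thesis unfolding sc_iso_listed_def by blast
  qed
qed

lemma sc_iso_listed_if_e1_idempotent:
  fixes a2 :: "'a::field"
  assumes assoc: "sc_assoc ((1,a2,a3,0),(0,b2,b3,b4))"
  shows "sc_iso_listed ((1,a2,a3,0),(0,b2,b3,b4))"
proof -
  let ?B = "((1,a2,a3,0),(0,b2,b3,b4))"
  have A: "sc_mult ?B (sc_mult ?B x y) z = sc_mult ?B x (sc_mult ?B y z)" for x y z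
    using assoc unfolding sc_assoc_def by blast
  have e112: "a2*b2 = 0" "b2*b2 = b2" using A[of "(1,0)" "(1,0)" "(0,1)"] by (simp_all add: algebra_simps)
  have e211: "a3*b3 = 0" "b3*b3 = b3" using A[of "(0,1)" "(1,0)" "(1,0)"] by (simp_all add: algebra_simps)
  have e121: "a2 + b2*a3 = a3 + b3*a2" using A[of "(1,0)" "(0,1)" "(1,0)"] by (simp add: algebra_simps)
  have e221: "b4*a3 = a3*a3" using A[of "(0,1)" "(0,1)" "(1,0)"] by (simp add: algebra_simps)
  have e212: "a3*b2 + b3*b4 = a2*b3 + b2*b4" using A[of "(0,1)" "(1,0)" "(0,1)"] by (simp add: algebra_simps)
  have b2: "b2 = 0 \<or> b2 = 1" and b3: "b3 = 0 \<or> b3 = 1"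
    using e112(2) e211(2) by (metis mult_cancel_right1 mult_zero_left)+
  consider "b2 = 1" "b3 = 1" | "b2 = 1" "b3 = 0" | "b2 = 0" "b3 = 1" | "b2 = 0" "b3 = 0"
    using b2 b3 by blast
  then show ?thesis
  proof cases
    case 1
    then have a: "a2 = 0" "a3 = 0" using e112 e211 by simp_all
    show ?thesis
    proof (cases "b4 = 0")
      case True
      then have "sc_iso ?B (As2 0)" unfolding As2_def
        by (intro sc_iso_of_basis[where u="(0,1)" and v="(1,0)"])
          (use a 1 in \<open>simp_all add: det2_def lincomb2_def\<close>)
      then show ?thesis unfolding sc_iso_listed_def by blast
    next
      case False
      then have "sc_iso ?B (As4 0)" unfolding As4_def
        by (intro sc_iso_of_basis[where u="(0,1/b4)" and v="(1,0)"])
          (use a 1 in \<open>simp_all add: det2_def lincomb2_def field_simps\<close>)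
      then show ?thesis unfolding sc_iso_listed_def by blast
    qed
  next
    case 2
    then have a: "a2 = 0" "b4 = a3" using e112 e212 by simp_all
    have "sc_iso ?B As6" unfolding As6_def
      by (intro sc_iso_of_basis[where u="(1,0)" and v="(-a3,1)"])
        (use a 2 in \<open>simp_all add: det2_def lincomb2_def algebra_simps\<close>)
    then show ?thesis unfolding sc_iso_listed_def by blast
  next
    case 3
    then have a: "a3 = 0" "b4 = a2" using e211 e212 by simp_all
    have "sc_iso ?B As3" unfolding As3_def
      by (intro sc_iso_of_basis[where u="(1,0)" and v="(-a2,1)"])
        (use a 3 in \<open>simp_all add: det2_def lincomb2_def algebra_simps\<close>)
    then show ?thesis unfolding sc_iso_listed_def by blast
  next
    case 4
    then have a: "a2 = a3" using e121 by simp
    show ?thesis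
    proof (cases "b4 = 0")
      case True
      then have "a3 = 0" using e221 by simp
      then have "sc_iso ?B As5" unfolding As5_def
        by (intro sc_iso_of_basis[where u="(1,0)" and v="(0,1)"])
          (use a 4 True in \<open>simp_all add: det2_def lincomb2_def\<close>)
      then show ?thesis unfolding sc_iso_listed_def by blast
    next
      case False
      then have "sc_iso ?B (As4 0)" unfolding As4_def
        by (intro sc_iso_of_basis[where u="(1,0)" and v="(1 - a3/b4,1/b4)"])
          (use a 4 e221 in \<open>simp_all add: det2_def lincomb2_def field_simps power2_eq_square\<close>)
      then show ?thesis unfolding sc_iso_listed_def by blast
    qed
  qed
qed

lemma sc_trivial_if_squares_vanish:
  fixes A :: "'a::field sc"
  assumes assoc: "sc_assoc A" and squares: "\<And>x. sc_mult A x x = (0,0)"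
  shows "\<not> sc_nontrivial A"
proof -
  obtain a1 a2 a3 a4 b1 b2 b3 b4 where A: "A = ((a1,a2,a3,a4),(b1,b2,b3,b4))"
    by (metis prod.exhaust)
  have diag: "a1 = 0" "b1 = 0" "a4 = 0" "b4 = 0"
    using squares[of "(1,0)"] squares[of "(0,1)"] by (simp_all add: A)
  then have anti: "a3 = - a2" "b3 = - b2"
    using squares[of "(1,1)"] by (simp_all add: A eq_neg_iff_add_eq_0 add.commute)
  have "b2*b2 = 0" "a3*a3 = 0"
    using assoc[unfolded sc_assoc_def, rule_format, of "(1,0)" "(1,0)" "(0,1)"]
      assoc[unfolded sc_assoc_def, rule_format, of "(0,1)" "(0,1)" "(1,0)"]
    by (simp_all add: A diag)
  then have "A = ((0,0,0,0),(0,0,0,0))" using A diag anti by simp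
  then show ?thesis by (simp add: sc_nontrivial_def)
qed

lemma sc_iso_listed_if_square_independent:
  assumes assoc: "sc_assoc A" and x: "det2 x (sc_mult A x x) \<noteq> 0"
  shows "sc_iso_listed A"
proof -
  obtain a1 a2 a3 a4 b1 b2 b3 b4 where iso: "sc_iso A ((a1,a2,a3,a4),(b1,b2,b3,b4))"
    and "sc_mult A x x = lincomb2 a1 b1 x (sc_mult A x x)"
    using sc_iso_structure_constants[OF x] by metis
  then have "lincomb2 a1 b1 x (sc_mult A x x) = lincomb2 0 1 x (sc_mult A x x)"
    by (simp add: lincomb2_def)
  then have "a1 = 0" "b1 = 1" using lincomb2_unique[OF x] by blast+
  then show ?thesis
    using sc_iso_listed_if_e1_square_e2 sc_assoc_iso[OF iso assoc] sc_iso_listed_iso[OF iso] by blast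
qed

lemma idempotent_if_square_dependent:
  assumes "det2 x (sc_mult A x x) = 0" "sc_mult A x x \<noteq> (0,0)"
  obtains e where "sc_mult A e e = e" "e \<noteq> (0,0)"
proof -
  have "x \<noteq> (0,0)" using assms(2) by (auto simp: sc_mult_def split: prod.splits)
  then obtain l where l: "sc_mult A x x = vscale2 l x" using det2_eq_0_imp_scaled assms(1) by blast
  with assms(2) have "l \<noteq> 0" by (auto simp: vscale2_def)
  then have "sc_mult A (vscale2 (1/l) x) (vscale2 (1/l) x) = vscale2 (1/l) x"
    unfolding sc_mult_vscale2 l by (simp add: vscale2_def field_simps power2_eq_square)
  moreover have "vscale2 (1/l) x \<noteq> (0,0)"
    using \<open>x \<noteq> (0,0)\<close> \<open>l \<noteq> 0\<close> by (cases x) (simp add: vscale2_def)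
  ultimately show thesis by (rule that)
qed

lemma sc_iso_listed_if_idempotent:
  assumes assoc: "sc_assoc A" and e: "sc_mult A e e = e" "e \<noteq> (0,0)"
    and dependent: "\<And>y. det2 y (sc_mult A y y) = 0"
  shows "sc_iso_listed A"
proof -
  obtain v where d: "det2 e v \<noteq> 0" using det2_nonzero_exists[OF e(2)] by blast
  obtain a1 a2 a3 a4 b1 b2 b3 b4 where iso: "sc_iso A ((a1,a2,a3,a4),(b1,b2,b3,b4))"
    and ee: "sc_mult A e e = lincomb2 a1 b1 e v" and vv: "sc_mult A v v = lincomb2 a4 b4 e v"
    using sc_iso_structure_constants[OF d] by metis
  have "lincomb2 a1 b1 e v = lincomb2 1 0 e v" using ee e(1) by (simp add: lincomb2_def)
  then have "a1 = 1" "b1 = 0" using lincomb2_unique[OF d] by blast+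
  have "a4 * det2 e v = 0"
    using dependent[of v] det2_lincomb2_left[of a4 b4 e v] det2_swap[of v] by (simp add: vv)
  then have "a4 = 0" using d by simp
  show ?thesis
    using sc_iso_listed_if_e1_idempotent sc_assoc_iso[OF iso assoc] sc_iso_listed_iso[OF iso]
      \<open>a1 = 1\<close> \<open>b1 = 0\<close> \<open>a4 = 0\<close> by blast
qed

lemma sc_iso_listed_if_assoc_nontrivial:
  assumes assoc: "sc_assoc A" and "sc_nontrivial A"
  shows "sc_iso_listed A"
proof (cases "\<exists>x. det2 x (sc_mult A x x) \<noteq> 0")
  case True
  then show ?thesis using sc_iso_listed_if_square_independent assoc by blast
next
  case False
  moreover obtain x where "sc_mult A x x \<noteq> (0,0)"
    using sc_trivial_if_squares_vanish assms by blast
  ultimately obtain e where "sc_mult A e e = e" "e \<noteq> (0,0)"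
    using idempotent_if_square_dependent by blast
  with False show ?thesis using sc_iso_listed_if_idempotent assoc by blast
qed

lemma add_self_CHAR_2: "CHAR('a::ring_1) = 2 \<Longrightarrow> (x::'a) + x = 0"
  by (metis uminus_CHAR_2 add.right_inverse)

lemma sc_iso_map_unit:
  assumes f: "sc_iso_map A B f"
    and "\<And>x. sc_mult A e x = x" and "\<And>y. sc_mult B y e' = y"
  shows "f e = e'"
proof -
  have "sc_mult B (f e) y = y" for y
    using sc_iso_map_surj[OF f, of y] assms(2) sc_iso_map_mult[OF f] by metis
  then show ?thesis using assms(3) by metis
qed

lemma sc_iso_map_fixing_e2:
  assumes f: "sc_iso_map A B f"
    and "\<And>x. sc_mult A (0,1) x = x" and "\<And>y. sc_mult B y (0,1) = y"
  obtains s t where "s \<noteq> 0" "\<And>x1 x2. f (x1,x2) = (x1*s, x1*t + x2)"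
proof -
  have lin: "linear2 f" and "inj f" using f by (auto simp: sc_iso_map_def bij_def)
  have e2: "f (0,1) = (0,1)" by (rule sc_iso_map_unit[OF f assms(2,3)])
  obtain s t where e1: "f (1,0) = (s,t)" by fastforce
  have "s \<noteq> 0" using linear2_inj_det2[OF lin \<open>inj f\<close>] by (simp add: e1 e2 det2_def)
  moreover have "f (x1,x2) = (x1*s, x1*t + x2)" for x1 x2
    by (simp add: linear2_apply[OF lin, of x1] e1 e2 lincomb2_def)
  ultimately show thesis by (rule that)
qed

lemma As2_iso_iff:
  fixes b :: "'a::field"
  assumes char: "CHAR('a) = 2"
  shows "sc_iso (As2 b) (As2 b') \<longleftrightarrow> (\<exists>a c. c \<noteq> 0 \<and> b' = c^2 * (b + a^2))"
proof
  assume "sc_iso (As2 b) (As2 b')"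
  then obtain f where f: "sc_iso_map (As2 b) (As2 b') f" by (auto simp: sc_iso_iff_map)
  obtain s t where "s \<noteq> 0" and f_eq: "\<And>x1 x2. f (x1,x2) = (x1*s, x1*t + x2)"
    by (rule sc_iso_map_fixing_e2[OF f]) (auto simp: As2_def)
  have "f (sc_mult (As2 b) (1,0) (1,0)) = sc_mult (As2 b') (f (1,0)) (f (1,0))"
    by (rule sc_iso_map_mult[OF f])
  then have "s*s*b' = b - t*t" by (simp add: As2_def f_eq)
  then have "b' = (1/s)^2 * (b + t^2)"
    using \<open>s \<noteq> 0\<close> minus_CHAR_2[OF char] by (simp add: field_simps power2_eq_square)
  then show "\<exists>a c. c \<noteq> 0 \<and> b' = c^2 * (b + a^2)"
    using \<open>s \<noteq> 0\<close> by (intro exI[of _ t] exI[of _ "1/s"]) simp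
next
  assume "\<exists>a c. c \<noteq> 0 \<and> b' = c^2 * (b + a^2)"
  then obtain a c where "c \<noteq> 0" "b' = c^2 * (b + a^2)" by blast
  moreover have "c*(c*a) + c*(c*a) = 0" by (rule add_self_CHAR_2[OF char])
  ultimately show "sc_iso (As2 b) (As2 b')" unfolding As2_def
    by (intro sc_iso_of_basis[where u="(c,c*a)" and v="(0,1)"])
      (simp_all add: det2_def lincomb2_def algebra_simps power2_eq_square)
qed

lemma As4_iso_iff:
  fixes b :: "'a::field"
  assumes char: "CHAR('a) = 2"
  shows "sc_iso (As4 b) (As4 b') \<longleftrightarrow> (\<exists>a. b' = b + a + a^2)"
proof
  assume "sc_iso (As4 b) (As4 b')"
  then obtain f where f: "sc_iso_map (As4 b) (As4 b') f" by (auto simp: sc_iso_iff_map)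
  obtain s t where "s \<noteq> 0" and f_eq: "\<And>x1 x2. f (x1,x2) = (x1*s, x1*t + x2)"
    by (rule sc_iso_map_fixing_e2[OF f]) (auto simp: As4_def)
  have "f (sc_mult (As4 b) (1,0) (1,0)) = sc_mult (As4 b') (f (1,0)) (f (1,0))"
    by (rule sc_iso_map_mult[OF f])
  then have "s = s*s + (s*t + s*t)" and t: "t + b = s*s*b' + t*t"
    by (simp_all add: As4_def f_eq algebra_simps)
  then have "s = s*s" using add_self_CHAR_2[OF char, of "s*t"] by simp
  then have "s = 1" using \<open>s \<noteq> 0\<close> by (metis mult_cancel_left1)
  with t have "b' = b + t - t*t" by (simp add: algebra_simps)
  then have "b' = b + t + t^2" using minus_CHAR_2[OF char] by (simp add: power2_eq_square)
  then show "\<exists>a. b' = b + a + a^2" by blast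
next
  assume "\<exists>a. b' = b + a + a^2"
  then obtain a where "b' = b + a + a^2" by blast
  moreover have "a + a = 0" by (rule add_self_CHAR_2[OF char])
  ultimately show "sc_iso (As4 b) (As4 b')" unfolding As4_def
    by (intro sc_iso_of_basis[where u="(1,a)" and v="(0,1)"])
      (simp_all add: det2_def lincomb2_def algebra_simps power2_eq_square)
qed

definition sc_unital :: "'a::field sc \<Rightarrow> bool" where
  "sc_unital A \<longleftrightarrow> (\<exists>e. \<forall>x. sc_mult A e x = x \<and> sc_mult A x e = x)"

definition sc_right_unital :: "'a::field sc \<Rightarrow> bool" where
  "sc_right_unital A \<longleftrightarrow> (\<exists>e. \<forall>x. sc_mult A x e = x)"

definition sc_comm :: "'a::field sc \<Rightarrow> bool" where
  "sc_comm A \<longleftrightarrow> (\<forall>x y. sc_mult A x y = sc_mult A y x)"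

definition sc_cube_zero :: "'a::field sc \<Rightarrow> bool" where
  "sc_cube_zero A \<longleftrightarrow> (\<forall>x y z. sc_mult A (sc_mult A x y) z = (0,0))"

definition sc_squares_scalar :: "'a::field sc \<Rightarrow> bool" where
  "sc_squares_scalar A \<longleftrightarrow> (\<forall>x. \<exists>c. \<forall>y. sc_mult A (sc_mult A x x) y = vscale2 c y)"

lemma sc_unital_iso:
  assumes "sc_iso A B" "sc_unital A" shows "sc_unital B"
proof -
  obtain f e where f: "sc_iso_map A B f" and e: "\<forall>x. sc_mult A e x = x \<and> sc_mult A x e = x"
    using assms by (auto simp: sc_iso_iff_map sc_unital_def)
  have "sc_mult B (f e) y = y \<and> sc_mult B y (f e) = y" for y
    using sc_iso_map_surj[OF f, of y] e sc_iso_map_mult[OF f] by metis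
  then show ?thesis unfolding sc_unital_def by blast
qed

lemma sc_right_unital_iso:
  assumes "sc_iso A B" "sc_right_unital A" shows "sc_right_unital B"
proof -
  obtain f e where f: "sc_iso_map A B f" and e: "\<forall>x. sc_mult A x e = x"
    using assms by (auto simp: sc_iso_iff_map sc_right_unital_def)
  have "sc_mult B y (f e) = y" for y
    using sc_iso_map_surj[OF f, of y] e sc_iso_map_mult[OF f] by metis
  then show ?thesis unfolding sc_right_unital_def by blast
qed

lemma sc_comm_iso:
  assumes "sc_iso A B" "sc_comm A" shows "sc_comm B"
proof -
  obtain f where f: "sc_iso_map A B f" using assms by (auto simp: sc_iso_iff_map)
  have "sc_mult B (f x) (f y) = sc_mult B (f y) (f x)" for x y
    using assms(2) by (simp del: split_paired_All add: sc_comm_def sc_iso_map_mult[OF f, symmetric])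
  then show ?thesis unfolding sc_comm_def by (metis sc_iso_map_surj[OF f])
qed

lemma sc_cube_zero_iso:
  assumes "sc_iso A B" "sc_cube_zero A" shows "sc_cube_zero B"
proof -
  obtain f where f: "sc_iso_map A B f" using assms by (auto simp: sc_iso_iff_map)
  have "sc_mult B (sc_mult B (f x) (f y)) (f z) = (0,0)" for x y z
    using assms(2) linear2_zero[of f] f
    by (simp del: split_paired_All
        add: sc_cube_zero_def sc_iso_map_def sc_iso_map_mult[OF f, symmetric])
  then show ?thesis unfolding sc_cube_zero_def by (metis sc_iso_map_surj[OF f])
qed

lemma sc_squares_scalar_iso:
  assumes "sc_iso A B" "sc_squares_scalar A" shows "sc_squares_scalar B"
proof -
  obtain f where f: "sc_iso_map A B f" using assms by (auto simp: sc_iso_iff_map)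
  have "\<exists>c. \<forall>y. sc_mult B (sc_mult B (f x) (f x)) (f y) = vscale2 c (f y)" for x
  proof -
    obtain c where "\<forall>y. sc_mult A (sc_mult A x x) y = vscale2 c y"
      using assms(2) unfolding sc_squares_scalar_def by blast
    then have "sc_mult B (sc_mult B (f x) (f x)) (f y) = vscale2 c (f y)" for y
      using f by (simp del: split_paired_All
          add: sc_iso_map_def linear2_def sc_iso_map_mult[OF f, symmetric])
    then show ?thesis by blast
  qed
  then show ?thesis unfolding sc_squares_scalar_def by (metis sc_iso_map_surj[OF f])
qed

lemma sc_iso_invariants:
  assumes "sc_iso A B"
  shows "sc_unital A = sc_unital B" "sc_comm A = sc_comm B" "sc_right_unital A = sc_right_unital B"
    "sc_cube_zero A = sc_cube_zero B" "sc_squares_scalar A = sc_squares_scalar B"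
  using assms sc_iso_sym sc_unital_iso sc_comm_iso sc_right_unital_iso sc_cube_zero_iso
    sc_squares_scalar_iso by metis+

lemma sc_unital_As2: "sc_unital (As2 b)"
  unfolding sc_unital_def by (rule exI[of _ "(0,1)"]) (simp add: As2_def)

lemma sc_unital_As4: "sc_unital (As4 b)"
  unfolding sc_unital_def by (rule exI[of _ "(0,1)"]) (simp add: As4_def)

lemma not_sc_unital_As1: "\<not> sc_unital (As1::'a::field sc)"
proof
  assume "sc_unital (As1::'a sc)"
  then obtain e where "sc_mult (As1::'a sc) e (1,0) = (1,0)" unfolding sc_unital_def by blast
  then show False by (cases e) (simp add: As1_def)
qed

lemma not_sc_unital_As3: "\<not> sc_unital (As3::'a::field sc)"
proof
  assume "sc_unital (As3::'a sc)"
  then obtain e where "sc_mult (As3::'a sc) e (0,1) = (0,1)" unfolding sc_unital_def by blast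
  then show False by (cases e) (simp add: As3_def)
qed

lemma not_sc_unital_As5: "\<not> sc_unital (As5::'a::field sc)"
proof
  assume "sc_unital (As5::'a sc)"
  then obtain e where "sc_mult (As5::'a sc) e (0,1) = (0,1)" unfolding sc_unital_def by blast
  then show False by (cases e) (simp add: As5_def)
qed

lemma not_sc_unital_As6: "\<not> sc_unital (As6::'a::field sc)"
proof
  assume "sc_unital (As6::'a sc)"
  then obtain e where "sc_mult (As6::'a sc) (0,1) e = (0,1)" unfolding sc_unital_def by blast
  then show False by (cases e) (simp add: As6_def)
qed

lemma sc_comm_As1: "sc_comm (As1::'a::field sc)"
  unfolding sc_comm_def by (simp add: As1_def algebra_simps)

lemma sc_comm_As5: "sc_comm (As5::'a::field sc)"
  unfolding sc_comm_def by (simp add: As5_def algebra_simps)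

lemma not_sc_comm_As3: "\<not> sc_comm (As3::'a::field sc)"
  unfolding sc_comm_def not_all by (intro exI[of _ "(1,0)"] exI[of _ "(0,1)"]) (simp add: As3_def)

lemma not_sc_comm_As6: "\<not> sc_comm (As6::'a::field sc)"
  unfolding sc_comm_def not_all by (intro exI[of _ "(1,0)"] exI[of _ "(0,1)"]) (simp add: As6_def)

lemma sc_right_unital_As3: "sc_right_unital (As3::'a::field sc)"
  unfolding sc_right_unital_def by (rule exI[of _ "(1,0)"]) (simp add: As3_def)

lemma not_sc_right_unital_As6: "\<not> sc_right_unital (As6::'a::field sc)"
proof
  assume "sc_right_unital (As6::'a sc)"
  then obtain e where "sc_mult (As6::'a sc) (0,1) e = (0,1)" unfolding sc_right_unital_def by blast
  then show False by (cases e) (simp add: As6_def)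
qed

lemma sc_cube_zero_As1: "sc_cube_zero (As1::'a::field sc)"
  unfolding sc_cube_zero_def by (simp add: As1_def)

lemma not_sc_cube_zero_As5: "\<not> sc_cube_zero (As5::'a::field sc)"
  unfolding sc_cube_zero_def not_all by (intro exI[of _ "(1,0)"]) (simp add: As5_def)

lemma sc_squares_scalar_As2:
  assumes "CHAR('a::field) = 2" shows "sc_squares_scalar (As2 (b::'a))"
  unfolding sc_squares_scalar_def
proof
  fix x :: "'a \<times> 'a"
  obtain s t where x: "x = (s,t)" by fastforce
  have "sc_mult (As2 b) (sc_mult (As2 b) x x) y = vscale2 (s*s*b + t*t) y" for y
    using add_self_CHAR_2[OF assms, of "s*t"]
    by (cases y) (simp add: x As2_def vscale2_def algebra_simps)
  then show "\<exists>c. \<forall>y. sc_mult (As2 b) (sc_mult (As2 b) x x) y = vscale2 c y" by blast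
qed

lemma not_sc_squares_scalar_As4: "\<not> sc_squares_scalar (As4 (b::'a::field))"
  unfolding sc_squares_scalar_def not_all not_ex
  by (intro exI[of _ "(1,0)"] allI exI[of _ "(0,1)"]) (simp add: As4_def vscale2_def)

theorem mainTheorem2:
  fixes dummy :: "'a::field"
  assumes "CHAR('a) = 2"
  shows
    "(\<forall>A :: 'a sc. sc_assoc A \<and> sc_nontrivial A \<longrightarrow>
        sc_iso A As1 \<or> (\<exists>b. sc_iso A (As2 b)) \<or> sc_iso A As3 \<or>
        (\<exists>b. sc_iso A (As4 b)) \<or> sc_iso A As5 \<or> sc_iso A As6)
   \<and> (\<forall>b b' :: 'a. sc_iso (As2 b) (As2 b') \<longleftrightarrow> (\<exists>a c. c \<noteq> 0 \<and> b' = c^2 * (b + a^2)))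
   \<and> (\<forall>b b' :: 'a. sc_iso (As4 b) (As4 b') \<longleftrightarrow> (\<exists>a. b' = b + a + a^2))
   \<and> (\<forall>b b' :: 'a.
        \<not> sc_iso (As1 :: 'a sc) (As2 b) \<and> \<not> sc_iso (As1 :: 'a sc) As3 \<and> \<not> sc_iso (As1 :: 'a sc) (As4 b) \<and>
        \<not> sc_iso (As1 :: 'a sc) As5 \<and> \<not> sc_iso (As1 :: 'a sc) As6 \<and>
        \<not> sc_iso (As2 b) As3 \<and> \<not> sc_iso (As2 b) (As4 b') \<and> \<not> sc_iso (As2 b) As5 \<and> \<not> sc_iso (As2 b) As6 \<and>
        \<not> sc_iso (As3 :: 'a sc) (As4 b) \<and> \<not> sc_iso (As3 :: 'a sc) As5 \<and> \<not> sc_iso (As3 :: 'a sc) As6 \<and>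
        \<not> sc_iso (As4 b) As5 \<and> \<not> sc_iso (As4 b) As6 \<and>
        \<not> sc_iso (As5 :: 'a sc) As6)"
proof -
  note invariants = sc_unital_As2 sc_unital_As4 not_sc_unital_As1 not_sc_unital_As3
    not_sc_unital_As5 not_sc_unital_As6 sc_comm_As1 sc_comm_As5 not_sc_comm_As3 not_sc_comm_As6
    sc_right_unital_As3 not_sc_right_unital_As6 sc_cube_zero_As1 not_sc_cube_zero_As5
    sc_squares_scalar_As2[OF assms] not_sc_squares_scalar_As4
  show ?thesis
    by (intro conjI)
      (use sc_iso_listed_if_assoc_nontrivial[unfolded sc_iso_listed_def] in blast,
       use As2_iso_iff[OF assms] in blast, use As4_iso_iff[OF assms] in blast,
       use invariants in \<open>blast dest: sc_iso_invariants\<close>)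
qed

end
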